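(* Suppose $\boldsymbol{\phi}\in\mathcal{D}_{\boldsymbol{\phi}}(\boldsymbol{r})$ satisfies condition (SC). Then for any $(a,k)\in\mathcal{S}$ and $i\in\mathcal{V}$: if $\phi_{i0}(a,k)>0$ then $\frac{\partial T}{\partial t_i(a,k)}\ge\frac{\partial T}{\partial t_i(a,k+1)}$; and for all $j\in\mathcal{V}$ with $(i,j)\in\mathcal{E}$ and $\phi_{ij}(a,k)>0$, $\frac{\partial T}{\partial t_i(a,k)}\ge\frac{\partial T}{\partial t_j(a,k)}$. Moreover, if $t_i(a,k)>0$, both inequalities hold strictly.
   Context: Service-chain computing network model. $\mathcal{G}=(\mathcal{V},\mathcal{E})$ is a directed, strongly connected graph whose links are bidirectional ($(i,j)\in\mathcal{E}\Rightarrow(j,i)\in\mathcal{E}$). $\mathcal{A}$ is a finite set of applications; application $a$ has a destination $d_a\in\mathcal{V}$ and a chain of $|\mathcal{T}_a|$ tasks performed in order. The set of stages is $\mathcal{S}=\{(a,k): a\in\mathcal{A}, k=0,1,\dots,|\mathcal{T}_a|\}$; stage $(a,k)$ denotes packets that have completed the first $k$ tasks of $a$, and has packet size $L_{(a,k)}>0$. Exogenous input rates are $r_i(a)\ge 0$ (stage $(a,0)$ packets injected at node $i$), $\boldsymbol{r}=[r_i(a)]$. The forwarding strategy $\boldsymbol{\phi}=[\phi_{ij}(a,k)]_{(a,k)\in\mathcal{S},i\in\mathcal{V},j\in\{0\}\cup\mathcal{V}}$ has $\phi_{ij}(a,k)\in[0,1]$; for $j\in\mathcal{V}$ it is the fraction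 of node $i$'s stage-$(a,k)$ traffic sent to node $j$ (with $\phi_{ij}(a,k)=0$ if $(i,j)\notin\mathcal{E}$), and $\phi_{i0}(a,k)$ is the fraction sent to $i$'s local processor, which converts each stage-$(a,k)$ packet into one stage-$(a,k+1)$ packet; $\phi_{i0}(a,|\mathcal{T}_a|)=0$. Flow conservation: $\sum_{j\in\{0\}\cup\mathcal{V}}\phi_{ij}(a,k)=0$ if $k=|\mathcal{T}_a|$ and $i=d_a$, and $=1$ otherwise. Traffic $t_i(a,k)$ satisfies $t_i(a,0)=\sum_{j\in\mathcal{V}}t_j(a,0)\phi_{ji}(a,0)+r_i(a)$ and, for $k\ge1$, $t_i(a,k)=\sum_{j\in\mathcal{V}}t_j(a,k)\phi_{ji}(a,k)+t_i(a,k-1)\phi_{i0}(a,k-1)$. Link flows $f_{ij}(a,k)=t_i(a,k)\phi_{ij}(a,k)$, processor inputs $g_i(a,k)=t_i(a,k)\phi_{i0}(a,k)$, total link flow $F_{ij}=\sum_{(a,k)\in\mathcal{S}}L_{(a,k)}f_{ij}(a,k)$, computation workload $G_i=\sum_{(a,k)\in\mathcal{S}}w_i(a,k)g_i(a,k)$ with weights $w_i(a,k)>0$. Link costs $D_{ij}(\cdot)$ and computation costs $C_i(\cdot)$ are (strictly) increasing, continuously differentiable, convex functions (possibly taking value $+\infty$ outside a domain). Total cost $T(\boldsymbol{\phi})=\sum_{(i,j)\in\mathcal{E}}D_{ij}(F_{ij})+\sum_{i\in\mathcal{V}}C_i(G_i)$. The feasible set $\mathcal{D}_{\boldsymbol{\phi}}(\boldsymbol{r})$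 consists of $\boldsymbol{\phi}$ satisfying flow conservation with all $D_{ij}(F_{ij})<\infty$ and $C_i(G_i)<\infty$. Marginal quantities: $\partial T/\partial t_i(a,k)$ is the marginal total cost of an additional exogenous injection of stage-$(a,k)$ traffic at node $i$ (with $\boldsymbol{\phi}$ fixed); it satisfies $\partial T/\partial t_{d_a}(a,|\mathcal{T}_a|)=0$, for $k=|\mathcal{T}_a|$: $\frac{\partial T}{\partial t_i(a,k)}=\sum_{j\in\mathcal{V}}\phi_{ij}(a,k)\big(L_{(a,k)}D'_{ij}(F_{ij})+\frac{\partial T}{\partial t_j(a,k)}\big)$, and for $k<|\mathcal{T}_a|$: $\frac{\partial T}{\partial t_i(a,k)}=\phi_{i0}(a,k)\big(w_i(a,k)C'_i(G_i)+\frac{\partial T}{\partial t_i(a,k+1)}\big)+\sum_{j\in\mathcal{V}}\phi_{ij}(a,k)\big(L_{(a,k)}D'_{ij}(F_{ij})+\frac{\partial T}{\partial t_j(a,k)}\big)$. Modified marginals: $\delta_{ij}(a,k)=L_{(a,k)}D'_{ij}(F_{ij})+\frac{\partial T}{\partial t_j(a,k)}$ for $j\in\mathcal{V}$ with $(i,j)\in\mathcal{E}$, $\delta_{i0}(a,k)=w_i(a,k)C'_i(G_i)+\frac{\partial T}{\partial t_i(a,k+1)}$ for $k<|\mathcal{T}_a|$, and $\delta_{ij}(a,k)=\infty$ for $(i,j)\notin\mathcal{E}$ and $\delta_{i0}(a,|\mathcal{T}_a|)=\infty$. Condition (SC): for all $i\in\mathcal{V}$, $j\in\{0\}\cup\mathcal{V}$,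 $(a,k)\in\mathcal{S}$, $\delta_{ij}(a,k)=\min_{j'\in\{0\}\cup\mathcal{V}}\delta_{ij'}(a,k)$ if $\phi_{ij}(a,k)>0$ and $\delta_{ij}(a,k)\ge\min_{j'}\delta_{ij'}(a,k)$ if $\phi_{ij}(a,k)=0$. *)

theory Defs
  imports "HOL-Analysis.Analysis"
begin

text \<open>Vertices have type 'v, applications type 'a.  The forwarding variables are
  phi i j a k  with  j :: 'v option : phi i (Some j) a k is the fraction of node i's
  stage-(a,k) traffic sent to neighbour j, and phi i None a k is the fraction
  phi_{i0}(a,k) sent to the local processor.  K a is the chain length |T_a|,
  d a the destination, L a k the packet size L_(a,k), w i a k the weight w_i(a,k).
  Cost functions are real valued on a domain [0, cap) (cap an extended real > 0);
  outside this domain the cost is +infinity.  Dd/Cd are their derivatives.\<close>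

definition stages :: "'a set \<Rightarrow> ('a \<Rightarrow> nat) \<Rightarrow> ('a \<times> nat) set" where
  "stages A K = {(a, k). a \<in> A \<and> k \<le> K a}"

definition outs :: "'v set \<Rightarrow> 'v option set" where
  "outs V = insert None (Some ` V)"

definition cost_dom :: "ereal \<Rightarrow> real set" where
  "cost_dom cap = {x. 0 \<le> x \<and> ereal x < cap}"

definition cost_fun :: "(real \<Rightarrow> real) \<Rightarrow> (real \<Rightarrow> real) \<Rightarrow> ereal \<Rightarrow> bool" where
  "cost_fun f f' cap \<longleftrightarrow>
     0 < cap \<and>
     strict_mono_on (cost_dom cap) f \<and>
     convex_on (cost_dom cap) f \<and>
     (\<forall>x\<in>cost_dom cap. (f has_real_derivative f' x) (at x within cost_dom cap)) \<and>
     continuous_on (cost_dom cap) f'"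

definition linkflow ::
  "'a set \<Rightarrow> ('a \<Rightarrow> nat) \<Rightarrow> ('a \<Rightarrow> nat \<Rightarrow> real) \<Rightarrow> ('v \<Rightarrow> 'a \<Rightarrow> nat \<Rightarrow> real)
   \<Rightarrow> ('v \<Rightarrow> 'v option \<Rightarrow> 'a \<Rightarrow> nat \<Rightarrow> real) \<Rightarrow> 'v \<Rightarrow> 'v \<Rightarrow> real" where
  "linkflow A K L t phi i j = (\<Sum>(a, k)\<in>stages A K. L a k * (t i a k * phi i (Some j) a k))"

definition workload ::
  "'a set \<Rightarrow> ('a \<Rightarrow> nat) \<Rightarrow> ('v \<Rightarrow> 'a \<Rightarrow> nat \<Rightarrow> real) \<Rightarrow> ('v \<Rightarrow> 'a \<Rightarrow> nat \<Rightarrow> real)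
   \<Rightarrow> ('v \<Rightarrow> 'v option \<Rightarrow> 'a \<Rightarrow> nat \<Rightarrow> real) \<Rightarrow> 'v \<Rightarrow> real" where
  "workload A K w t phi i = (\<Sum>(a, k)\<in>stages A K. w i a k * (t i a k * phi i None a k))"

definition is_traffic ::
  "'v set \<Rightarrow> 'a set \<Rightarrow> ('a \<Rightarrow> nat) \<Rightarrow> ('v \<Rightarrow> 'a \<Rightarrow> real)
   \<Rightarrow> ('v \<Rightarrow> 'v option \<Rightarrow> 'a \<Rightarrow> nat \<Rightarrow> real) \<Rightarrow> ('v \<Rightarrow> 'a \<Rightarrow> nat \<Rightarrow> real) \<Rightarrow> bool" where
  "is_traffic V A K r phi t \<longleftrightarrow>
     (\<forall>i\<in>V. \<forall>(a, k)\<in>stages A K. 0 \<le> t i a k) \<and>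
     (\<forall>i\<in>V. \<forall>a\<in>A.
        t i a 0 = (\<Sum>j\<in>V. t j a 0 * phi j (Some i) a 0) + r i a \<and>
        (\<forall>k. 1 \<le> k \<and> k \<le> K a \<longrightarrow>
           t i a k = (\<Sum>j\<in>V. t j a k * phi j (Some i) a k) + t i a (k - 1) * phi i None a (k - 1)))"

definition feasible ::
  "'v set \<Rightarrow> ('v \<times> 'v) set \<Rightarrow> 'a set \<Rightarrow> ('a \<Rightarrow> 'v) \<Rightarrow> ('a \<Rightarrow> nat)
   \<Rightarrow> ('a \<Rightarrow> nat \<Rightarrow> real) \<Rightarrow> ('v \<Rightarrow> 'a \<Rightarrow> nat \<Rightarrow> real)
   \<Rightarrow> ('v \<Rightarrow> 'v \<Rightarrow> ereal) \<Rightarrow> ('v \<Rightarrow> ereal)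
   \<Rightarrow> ('v \<Rightarrow> 'a \<Rightarrow> nat \<Rightarrow> real) \<Rightarrow> ('v \<Rightarrow> 'v option \<Rightarrow> 'a \<Rightarrow> nat \<Rightarrow> real) \<Rightarrow> bool" where
  "feasible V E A d K L w capD capC t phi \<longleftrightarrow>
     (\<forall>i\<in>V. \<forall>j\<in>outs V. \<forall>(a, k)\<in>stages A K. 0 \<le> phi i j a k \<and> phi i j a k \<le> 1) \<and>
     (\<forall>i\<in>V. \<forall>j\<in>V. \<forall>(a, k)\<in>stages A K. (i, j) \<notin> E \<longrightarrow> phi i (Some j) a k = 0) \<and>
     (\<forall>i\<in>V. \<forall>a\<in>A. phi i None a (K a) = 0) \<and>
     (\<forall>i\<in>V. \<forall>(a, k)\<in>stages A K.
        (\<Sum>j\<in>outs V. phi i j a k) = (if k = K a \<and> i = d a then 0 else 1)) \<and>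
     (\<forall>(i, j)\<in>E. linkflow A K L t phi i j \<in> cost_dom (capD i j)) \<and>
     (\<forall>i\<in>V. workload A K w t phi i \<in> cost_dom (capC i))"

text \<open>Marginal costs dT i a k = partial T / partial t_i(a,k), characterised by
  the recursive equations of the model.\<close>
definition is_marginal ::
  "'v set \<Rightarrow> 'a set \<Rightarrow> ('a \<Rightarrow> 'v) \<Rightarrow> ('a \<Rightarrow> nat)
   \<Rightarrow> ('a \<Rightarrow> nat \<Rightarrow> real) \<Rightarrow> ('v \<Rightarrow> 'a \<Rightarrow> nat \<Rightarrow> real)
   \<Rightarrow> ('v \<Rightarrow> 'v \<Rightarrow> real \<Rightarrow> real) \<Rightarrow> ('v \<Rightarrow> real \<Rightarrow> real)
   \<Rightarrow> ('v \<Rightarrow> 'a \<Rightarrow> nat \<Rightarrow> real) \<Rightarrow> ('v \<Rightarrow> 'v option \<Rightarrow> 'a \<Rightarrow> nat \<Rightarrow> real)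
   \<Rightarrow> ('v \<Rightarrow> 'a \<Rightarrow> nat \<Rightarrow> real) \<Rightarrow> bool" where
  "is_marginal V A d K L w Dd Cd t phi dT \<longleftrightarrow>
     (\<forall>a\<in>A. dT (d a) a (K a) = 0) \<and>
     (\<forall>i\<in>V. \<forall>(a, k)\<in>stages A K. \<not> (i = d a \<and> k = K a) \<longrightarrow>
        dT i a k =
          (if k < K a
           then phi i None a k * (w i a k * Cd i (workload A K w t phi i) + dT i a (Suc k))
           else 0)
          + (\<Sum>j\<in>V. phi i (Some j) a k *
                 (L a k * Dd i j (linkflow A K L t phi i j) + dT j a k)))"

definition delta ::
  "('v \<times> 'v) set \<Rightarrow> 'a set \<Rightarrow> ('a \<Rightarrow> nat)
   \<Rightarrow> ('a \<Rightarrow> nat \<Rightarrow> real) \<Rightarrow> ('v \<Rightarrow> 'a \<Rightarrow> nat \<Rightarrow> real)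
   \<Rightarrow> ('v \<Rightarrow> 'v \<Rightarrow> real \<Rightarrow> real) \<Rightarrow> ('v \<Rightarrow> real \<Rightarrow> real)
   \<Rightarrow> ('v \<Rightarrow> 'a \<Rightarrow> nat \<Rightarrow> real) \<Rightarrow> ('v \<Rightarrow> 'v option \<Rightarrow> 'a \<Rightarrow> nat \<Rightarrow> real)
   \<Rightarrow> ('v \<Rightarrow> 'a \<Rightarrow> nat \<Rightarrow> real) \<Rightarrow> 'v \<Rightarrow> 'v option \<Rightarrow> 'a \<Rightarrow> nat \<Rightarrow> ereal" where
  "delta E A K L w Dd Cd t phi dT i j a k =
     (case j of
        None \<Rightarrow> (if k < K a
                 then ereal (w i a k * Cd i (workload A K w t phi i) + dT i a (Suc k))
                 else \<infinity>)
      | Some j' \<Rightarrow> (if (i, j') \<in> E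
                    then ereal (L a k * Dd i j' (linkflow A K L t phi i j') + dT j' a k)
                    else \<infinity>))"

definition cond_SC ::
  "'v set \<Rightarrow> ('v \<times> 'v) set \<Rightarrow> 'a set \<Rightarrow> ('a \<Rightarrow> nat)
   \<Rightarrow> ('a \<Rightarrow> nat \<Rightarrow> real) \<Rightarrow> ('v \<Rightarrow> 'a \<Rightarrow> nat \<Rightarrow> real)
   \<Rightarrow> ('v \<Rightarrow> 'v \<Rightarrow> real \<Rightarrow> real) \<Rightarrow> ('v \<Rightarrow> real \<Rightarrow> real)
   \<Rightarrow> ('v \<Rightarrow> 'a \<Rightarrow> nat \<Rightarrow> real) \<Rightarrow> ('v \<Rightarrow> 'v option \<Rightarrow> 'a \<Rightarrow> nat \<Rightarrow> real)
   \<Rightarrow> ('v \<Rightarrow> 'a \<Rightarrow> nat \<Rightarrow> real) \<Rightarrow> bool" where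
  "cond_SC V E A K L w Dd Cd t phi dT \<longleftrightarrow>
     (\<forall>i\<in>V. \<forall>j\<in>outs V. \<forall>(a, k)\<in>stages A K.
        let dl = delta E A K L w Dd Cd t phi dT i;
            m = Min ((\<lambda>j'. dl j' a k) ` outs V)
        in (phi i j a k > 0 \<longrightarrow> dl j a k = m) \<and> (phi i j a k = 0 \<longrightarrow> dl j a k \<ge> m))"

end

theory Submission
  imports Defs
begin

text \<open>Under (SC) every direction j that carries traffic has the same modified marginal
  delta_ij(a,k), namely the minimum; since the marginal cost at i is the phi-weighted
  average of these deltas, it equals that common value.  Each delta exceeds the marginal
  cost at the next hop (or next stage) by L D' (or w C'), which is nonnegative because
  cost functions increase, and positive once the flow is positive, by convexity.\<close>

lemma mono_on_deriv_within_nonneg: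
  fixes f :: "real \<Rightarrow> real"
  assumes mono: "mono_on S f" and der: "(f has_real_derivative D) (at x within S)"
    and x: "x \<in> S" and limpt: "x islimpt S"
  shows "0 \<le> D"
proof (rule tendsto_lowerbound)
  show "((\<lambda>y. (f y - f x) / (y - x)) \<longlongrightarrow> D) (at x within S)"
    using der by (simp add: has_field_derivative_iff)
  show "at x within S \<noteq> bot"
    using limpt by (simp add: trivial_limit_within)
  show "\<forall>\<^sub>F y in at x within S. 0 \<le> (f y - f x) / (y - x)"
    unfolding eventually_at_filter
  proof (rule always_eventually, intro allI impI)
    fix y assume y: "y \<noteq> x" "y \<in> S"
    show "0 \<le> (f y - f x) / (y - x)"
    proof (cases "y < x")
      case True
      then have "f y \<le> f x" using mono x y by (simp add: mono_on_def)
      then show ?thesis using True by (simp add: divide_nonpos_nonpos)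
    next
      case False
      then have "f x \<le> f y" using mono x y by (simp add: mono_on_def)
      then show ?thesis using False y by simp
    qed
  qed
qed

lemma strict_mono_convex_deriv_pos:
  fixes f :: "real \<Rightarrow> real"
  assumes mono: "strict_mono_on S f" and conv: "convex_on S f" and conn: "connected S"
    and c: "c \<in> interior S" and x: "x \<in> S" "x < c"
    and der: "(f has_real_derivative D) (at c within S)"
  shows "0 < D"
proof -
  have "f x - f c \<ge> D * (x - c)"
    by (rule convex_on_imp_above_tangent[OF conv conn c x(1) der])
  moreover have "f x < f c"
    using mono x c interior_subset by (force simp: strict_mono_on_def)
  ultimately have "0 < D * (c - x)" by (simp add: algebra_simps)
  then show ?thesis using x(2) by (simp add: zero_less_mult_iff)
qed

lemma cost_dom_initial_segment:
  assumes "x \<in> cost_dom cap"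
  obtains z where "x < z" "{0..z} \<subseteq> cost_dom cap"
proof -
  from assms have "ereal x < cap" by (simp add: cost_dom_def)
  then obtain z where xz: "ereal x < ereal z" and z: "ereal z < cap"
    using ereal_dense2 by blast
  have "{0..z} \<subseteq> cost_dom cap"
  proof
    fix y assume "y \<in> {0..z}"
    then have "0 \<le> y" "ereal y \<le> ereal z" by auto
    moreover from this(2) z have "ereal y < cap" by (rule order.strict_trans1)
    ultimately show "y \<in> cost_dom cap" by (simp add: cost_dom_def)
  qed
  with xz show thesis by (intro that) auto
qed

lemma cost_fun_deriv_nonneg:
  assumes cf: "cost_fun f f' cap" and x: "x \<in> cost_dom cap"
  shows "0 \<le> f' x"
proof -
  obtain z where z: "x < z" "{0..z} \<subseteq> cost_dom cap"
    using cost_dom_initial_segment[OF x] .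
  have "{x<..<z} \<subseteq> {0..z}"
    using x by (auto simp: cost_dom_def)
  with z(2) have "{x<..<z} \<subseteq> cost_dom cap" by blast
  then have "x islimpt cost_dom cap"
    using islimpt_greaterThanLessThan1[OF z(1)] islimpt_subset by blast
  with cf x show ?thesis
    by (intro mono_on_deriv_within_nonneg[where f = f and S = "cost_dom cap"])
       (auto simp: cost_fun_def strict_mono_on_imp_mono_on)
qed

lemma cost_fun_deriv_pos:
  assumes cf: "cost_fun f f' cap" and x: "x \<in> cost_dom cap" and x_pos: "0 < x"
  shows "0 < f' x"
proof -
  obtain z where z: "x < z" "{0..z} \<subseteq> cost_dom cap"
    using cost_dom_initial_segment[OF x] .
  have mono: "strict_mono_on {0..z} f"
    using cf z(2) monotone_on_subset by (auto simp: cost_fun_def)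
  have conv: "convex_on {0..z} f"
    using cf z(2) convex_on_subset by (auto simp: cost_fun_def)
  have "(f has_real_derivative f' x) (at x within cost_dom cap)"
    using cf x by (simp add: cost_fun_def)
  then have der: "(f has_real_derivative f' x) (at x within {0..z})"
    using z(2) by (rule DERIV_subset)
  have "x \<in> interior {0..z}"
    using x_pos z(1) by simp
  from strict_mono_convex_deriv_pos[OF mono conv _ this _ x_pos der]
  show ?thesis using z(1) x_pos by simp
qed

lemma sum_outs:
  assumes "finite V"
  shows "(\<Sum>j\<in>outs V. f j) = f None + (\<Sum>j\<in>V. f (Some j))"
proof -
  have "(\<Sum>j\<in>outs V. f j) = f None + (\<Sum>j\<in>Some ` V. f j)"
    unfolding outs_def using assms by (subst sum.insert) auto
  also have "(\<Sum>j\<in>Some ` V. f j) = (\<Sum>j\<in>V. f (Some j))"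
    by (subst sum.reindex) auto
  finally show ?thesis .
qed

lemma finite_stages:
  assumes "finite A"
  shows "finite (stages A K)"
proof -
  have "stages A K = (SIGMA a:A. {..K a})" by (auto simp: stages_def)
  with assms show ?thesis by simp
qed

lemma weighted_sum_eq_common_value:
  fixes p g :: "'b \<Rightarrow> real"
  assumes "sum p S = 1" and "\<And>j. j \<in> S \<Longrightarrow> 0 < p j \<Longrightarrow> g j = c"
    and "\<And>j. j \<in> S \<Longrightarrow> 0 \<le> p j"
  shows "(\<Sum>j\<in>S. p j * g j) = c"
proof -
  have "(\<Sum>j\<in>S. p j * g j) = (\<Sum>j\<in>S. p j * c)"
    using assms(2,3) by (intro sum.cong) (auto simp: order_le_less)
  also have "\<dots> = c"
    using assms(1) by (simp flip: sum_distrib_right)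
  finally show ?thesis .
qed

text \<open>The modified marginal delta_ij(a,k) without its value +infinity on directions that
  cannot carry traffic.\<close>
definition marginal_via ::
  "'a set \<Rightarrow> ('a \<Rightarrow> nat) \<Rightarrow> ('a \<Rightarrow> nat \<Rightarrow> real) \<Rightarrow> ('v \<Rightarrow> 'a \<Rightarrow> nat \<Rightarrow> real)
   \<Rightarrow> ('v \<Rightarrow> 'v \<Rightarrow> real \<Rightarrow> real) \<Rightarrow> ('v \<Rightarrow> real \<Rightarrow> real)
   \<Rightarrow> ('v \<Rightarrow> 'a \<Rightarrow> nat \<Rightarrow> real) \<Rightarrow> ('v \<Rightarrow> 'v option \<Rightarrow> 'a \<Rightarrow> nat \<Rightarrow> real)
   \<Rightarrow> ('v \<Rightarrow> 'a \<Rightarrow> nat \<Rightarrow> real) \<Rightarrow> 'v \<Rightarrow> 'v option \<Rightarrow> 'a \<Rightarrow> nat \<Rightarrow> real" where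
  "marginal_via A K L w Dd Cd t phi dT i j a k =
     (case j of
        None \<Rightarrow> w i a k * Cd i (workload A K w t phi i) + dT i a (Suc k)
      | Some j' \<Rightarrow> L a k * Dd i j' (linkflow A K L t phi i j') + dT j' a k)"

lemma feasibleD:
  assumes feas: "feasible V E A d K L w capD capC t phi"
    and i: "i \<in> V" and stage: "(a, k) \<in> stages A K"
  shows "j \<in> outs V \<Longrightarrow> 0 \<le> phi i j a k"
    and "v \<in> V \<Longrightarrow> (i, v) \<notin> E \<Longrightarrow> phi i (Some v) a k = 0"
    and "phi i None a (K a) = 0"
    and "(\<Sum>j\<in>outs V. phi i j a k) = (if k = K a \<and> i = d a then 0 else 1)"
proof -
  have a: "a \<in> A" using stage by (simp add: stages_def)
  note F = feas[unfolded feasible_def]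
  show "j \<in> outs V \<Longrightarrow> 0 \<le> phi i j a k"
    using bspec[OF bspec[OF bspec[OF conjunct1[OF F] i]] stage] by simp
  show "v \<in> V \<Longrightarrow> (i, v) \<notin> E \<Longrightarrow> phi i (Some v) a k = 0"
    using bspec[OF bspec[OF bspec[OF conjunct1[OF conjunct2[OF F]] i]] stage] by simp
  show "phi i None a (K a) = 0"
    using F i a by blast
  show "(\<Sum>j\<in>outs V. phi i j a k) = (if k = K a \<and> i = d a then 0 else 1)"
    using bspec[OF bspec[OF conjunct1[OF conjunct2[OF conjunct2[OF conjunct2[OF F]]]] i] stage]
    by simp
qed

lemma delta_eq_marginal_via:
  assumes feas: "feasible V E A d K L w capD capC t phi"
    and i: "i \<in> V" and stage: "(a, k) \<in> stages A K"
    and j: "j \<in> outs V" and active: "0 < phi i j a k"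
  shows "delta E A K L w Dd Cd t phi dT i j a k
       = ereal (marginal_via A K L w Dd Cd t phi dT i j a k)"
proof (cases j)
  case None
  with active stage feasibleD(3)[OF feas i stage] have "k < K a"
    by (auto simp: stages_def order_le_less)
  with None show ?thesis by (simp add: delta_def marginal_via_def)
next
  case (Some j')
  with j have "j' \<in> V" by (auto simp: outs_def)
  with active Some feasibleD(2)[OF feas i stage] have "(i, j') \<in> E" by force
  with Some show ?thesis by (simp add: delta_def marginal_via_def)
qed

lemma marginal_eq_weighted_marginal_via:
  assumes finV: "finite V" and feas: "feasible V E A d K L w capD capC t phi"
    and marg: "is_marginal V A d K L w Dd Cd t phi dT"
    and i: "i \<in> V" and stage: "(a, k) \<in> stages A K" and not_final: "\<not> (i = d a \<and> k = K a)"
  shows "dT i a k = (\<Sum>j\<in>outs V. phi i j a k * marginal_via A K L w Dd Cd t phi dT i j a k)"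
proof -
  have "dT i a k = (if k < K a then phi i None a k * marginal_via A K L w Dd Cd t phi dT i None a k
                    else 0)
                 + (\<Sum>j\<in>V. phi i (Some j) a k * marginal_via A K L w Dd Cd t phi dT i (Some j) a k)"
    using bspec[OF bspec[OF conjunct2[OF marg[unfolded is_marginal_def]] i] stage] not_final
    by (simp add: marginal_via_def)
  also have "(if k < K a then phi i None a k * marginal_via A K L w Dd Cd t phi dT i None a k
              else 0) = phi i None a k * marginal_via A K L w Dd Cd t phi dT i None a k"
    using stage feasibleD(3)[OF feas i stage] by (auto simp: stages_def)
  finally show ?thesis
    using finV by (simp add: sum_outs)
qed

lemma active_marginal_via_eq_marginal:
  assumes finV: "finite V" and feas: "feasible V E A d K L w capD capC t phi"
    and marg: "is_marginal V A d K L w Dd Cd t phi dT"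
    and SC: "cond_SC V E A K L w Dd Cd t phi dT"
    and i: "i \<in> V" and stage: "(a, k) \<in> stages A K"
    and j: "j \<in> outs V" and active: "0 < phi i j a k"
  shows "marginal_via A K L w Dd Cd t phi dT i j a k = dT i a k"
proof -
  let ?g = "\<lambda>j. marginal_via A K L w Dd Cd t phi dT i j a k"
  let ?dl = "\<lambda>j. delta E A K L w Dd Cd t phi dT i j a k"
  have nonneg: "\<And>j. j \<in> outs V \<Longrightarrow> 0 \<le> phi i j a k"
    using feasibleD(1)[OF feas i stage] .
  have "finite (outs V)" using finV by (simp add: outs_def)
  have not_final: "\<not> (i = d a \<and> k = K a)"
  proof
    assume "i = d a \<and> k = K a"
    then have "(\<Sum>j\<in>outs V. phi i j a k) = 0"
      using feasibleD(4)[OF feas i stage] by simp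
    with \<open>finite (outs V)\<close> nonneg j have "phi i j a k = 0"
      by (simp add: sum_nonneg_eq_0_iff)
    with active show False by simp
  qed
  then have sum_one: "(\<Sum>j\<in>outs V. phi i j a k) = 1"
    using feasibleD(4)[OF feas i stage] by auto
  have at_min: "?dl j' = Min (?dl ` outs V)" if "j' \<in> outs V" "0 < phi i j' a k" for j'
    using bspec[OF bspec[OF bspec[OF SC[unfolded cond_SC_def] i] that(1)] stage] that(2)
    by (simp add: Let_def)
  have common: "?g j' = ?g j" if "j' \<in> outs V" "0 < phi i j' a k" for j'
    using at_min[OF that] at_min[OF j active] delta_eq_marginal_via[OF feas i stage that]
      delta_eq_marginal_via[OF feas i stage j active]
    by (metis ereal.inject)
  show ?thesis
    using marginal_eq_weighted_marginal_via[OF finV feas marg i stage not_final]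
      weighted_sum_eq_common_value[OF sum_one common nonneg]
    by simp
qed

lemma workload_pos:
  assumes "finite A" and stage: "(a, k) \<in> stages A K"
    and "\<And>a' k'. (a', k') \<in> stages A K \<Longrightarrow> 0 \<le> w i a' k'"
    and "\<And>a' k'. (a', k') \<in> stages A K \<Longrightarrow> 0 \<le> t i a' k'"
    and "\<And>a' k'. (a', k') \<in> stages A K \<Longrightarrow> 0 \<le> phi i None a' k'"
    and "0 < w i a k" and "0 < t i a k" and "0 < phi i None a k"
  shows "0 < workload A K w t phi i"
  unfolding workload_def
  by (rule sum_pos2[OF finite_stages[OF \<open>finite A\<close>] stage]) (use assms in auto)

lemma linkflow_pos:
  assumes "finite A" and stage: "(a, k) \<in> stages A K"
    and "\<And>a' k'. (a', k') \<in> stages A K \<Longrightarrow> 0 \<le> L a' k'"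
    and "\<And>a' k'. (a', k') \<in> stages A K \<Longrightarrow> 0 \<le> t i a' k'"
    and "\<And>a' k'. (a', k') \<in> stages A K \<Longrightarrow> 0 \<le> phi i (Some j) a' k'"
    and "0 < L a k" and "0 < t i a k" and "0 < phi i (Some j) a k"
  shows "0 < linkflow A K L t phi i j"
  unfolding linkflow_def
  by (rule sum_pos2[OF finite_stages[OF \<open>finite A\<close>] stage]) (use assms in auto)

theorem proposition4:
  fixes V :: "'v set" and E :: "('v \<times> 'v) set"
    and A :: "'a set" and d :: "'a \<Rightarrow> 'v" and K :: "'a \<Rightarrow> nat"
    and L :: "'a \<Rightarrow> nat \<Rightarrow> real" and r :: "'v \<Rightarrow> 'a \<Rightarrow> real"
    and w :: "'v \<Rightarrow> 'a \<Rightarrow> nat \<Rightarrow> real"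
    and D Dd :: "'v \<Rightarrow> 'v \<Rightarrow> real \<Rightarrow> real" and capD :: "'v \<Rightarrow> 'v \<Rightarrow> ereal"
    and C Cd :: "'v \<Rightarrow> real \<Rightarrow> real" and capC :: "'v \<Rightarrow> ereal"
    and phi :: "'v \<Rightarrow> 'v option \<Rightarrow> 'a \<Rightarrow> nat \<Rightarrow> real"
    and t dT :: "'v \<Rightarrow> 'a \<Rightarrow> nat \<Rightarrow> real"
  assumes finV: "finite V" and finA: "finite A"
    and E_sub: "E \<subseteq> V \<times> V"
    and E_sym: "\<And>i j. (i, j) \<in> E \<Longrightarrow> (j, i) \<in> E"
    and strongly_conn: "\<And>i j. i \<in> V \<Longrightarrow> j \<in> V \<Longrightarrow> (i, j) \<in> E\<^sup>*"
    and dest: "\<And>a. a \<in> A \<Longrightarrow> d a \<in> V"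
    and L_pos: "\<And>a k. (a, k) \<in> stages A K \<Longrightarrow> L a k > 0"
    and r_nonneg: "\<And>i a. i \<in> V \<Longrightarrow> a \<in> A \<Longrightarrow> r i a \<ge> 0"
    and w_pos: "\<And>i a k. i \<in> V \<Longrightarrow> (a, k) \<in> stages A K \<Longrightarrow> w i a k > 0"
    and D_cost: "\<And>i j. (i, j) \<in> E \<Longrightarrow> cost_fun (D i j) (Dd i j) (capD i j)"
    and C_cost: "\<And>i. i \<in> V \<Longrightarrow> cost_fun (C i) (Cd i) (capC i)"
    and traffic: "is_traffic V A K r phi t"
    and feas: "feasible V E A d K L w capD capC t phi"
    and marg: "is_marginal V A d K L w Dd Cd t phi dT"
    and SC: "cond_SC V E A K L w Dd Cd t phi dT"
    and stage: "(a, k) \<in> stages A K" and iV: "i \<in> V"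
  shows "(phi i None a k > 0 \<longrightarrow> dT i a k \<ge> dT i a (Suc k))
       \<and> (\<forall>j\<in>V. (i, j) \<in> E \<and> phi i (Some j) a k > 0 \<longrightarrow> dT i a k \<ge> dT j a k)
       \<and> (t i a k > 0 \<longrightarrow>
            (phi i None a k > 0 \<longrightarrow> dT i a k > dT i a (Suc k))
          \<and> (\<forall>j\<in>V. (i, j) \<in> E \<and> phi i (Some j) a k > 0 \<longrightarrow> dT i a k > dT j a k))"
proof -
  let ?G = "workload A K w t phi i" and ?F = "\<lambda>j. linkflow A K L t phi i j"
  have t_nonneg: "\<And>a' k'. (a', k') \<in> stages A K \<Longrightarrow> 0 \<le> t i a' k'"
    using traffic iV by (auto simp: is_traffic_def)
  have phi_nonneg: "\<And>j a' k'. j \<in> outs V \<Longrightarrow> (a', k') \<in> stages A K \<Longrightarrow> 0 \<le> phi i j a' k'"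
    using feasibleD(1)[OF feas iV] by blast
  have G_dom: "?G \<in> cost_dom (capC i)" and F_dom: "\<And>j. (i, j) \<in> E \<Longrightarrow> ?F j \<in> cost_dom (capD i j)"
    using feas iV by (auto simp: feasible_def)
  have processor: "dT i a k = w i a k * Cd i ?G + dT i a (Suc k)" if "0 < phi i None a k"
    using active_marginal_via_eq_marginal[OF finV feas marg SC iV stage _ that]
    by (simp add: outs_def marginal_via_def)
  have link: "dT i a k = L a k * Dd i j (?F j) + dT j a k" if "j \<in> V" "0 < phi i (Some j) a k" for j
    using active_marginal_via_eq_marginal[OF finV feas marg SC iV stage _ that(2)] that(1)
    by (simp add: outs_def marginal_via_def)
  have Cd_pos: "0 < Cd i ?G" if "0 < t i a k" "0 < phi i None a k"
    using that finA stage w_pos[OF iV] t_nonneg phi_nonneg[of None]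
    by (intro cost_fun_deriv_pos[OF C_cost[OF iV] G_dom] workload_pos[where A = A and K = K])
       (auto simp: outs_def less_imp_le)
  have Dd_pos: "0 < Dd i j (?F j)" if "(i, j) \<in> E" "0 < t i a k" "0 < phi i (Some j) a k" for j
    using that finA stage L_pos t_nonneg phi_nonneg[of "Some j"] E_sub
    by (intro cost_fun_deriv_pos[OF D_cost F_dom] linkflow_pos[where A = A and K = K])
       (auto simp: outs_def less_imp_le)
  have "0 \<le> Cd i ?G" and "\<And>j. (i, j) \<in> E \<Longrightarrow> 0 \<le> Dd i j (?F j)"
    using cost_fun_deriv_nonneg C_cost[OF iV] G_dom D_cost F_dom by blast+
  with processor link Cd_pos Dd_pos w_pos[OF iV stage] L_pos[OF stage] show ?thesis
    by (auto intro!: add_pos_nonneg add_nonneg_nonneg mult_pos_pos mult_nonneg_nonneg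
        simp: less_imp_le)
qed

end
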